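(* Let $(a_n)_{n\ge0}$ be the sequence defined by \[ \sum_{n=0}^{\infty}a_nz^n=\frac{1+36z+\sqrt{(1-12z)^3}}{2(1+4z)^2} \] (the sequence $1,1,3,14,83,570,\dots$, OEIS A220910). Then for all $n\ge2$, \[ n a_n=(8n-34)a_{n-1}+24(2n-3)a_{n-2}. \]
   Context: The square root is the branch analytic near $z=0$ with value $1$ at $z=0$. *)

theory Defs
  imports "HOL-Complex_Analysis.Complex_Analysis"
begin

text \<open>The generating function. csqrt is the principal square root; near z = 0 the
argument (1-12z)^3 lies near 1, so this is the branch analytic near 0 with value 1 at 0.\<close>
definition genf :: "complex \<Rightarrow> complex" where
  "genf z = (1 + 36 * z + csqrt ((1 - 12 * z) ^ 3)) / (2 * (1 + 4 * z) ^ 2)"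

definition a :: "nat \<Rightarrow> complex" where
  "a n = (deriv ^^ n) genf 0 / fact n"

end

theory Submission
  imports Defs
begin

text \<open>Write S for the power series of the square root, so that S^2 = (1 - 12z)^3. Differentiating
  this relation gives the first-order equation 2(1 - 12z) S' = -36 S, and substituting
  S = 2(1 + 4z)^2 A - 1 - 36z for the generating function A turns it into the linear equation
  2(1 - 12z)(1 + 4z) A' + (52 - 48z) A = 54, whose coefficients give the recurrence.\<close>

definition sqrt_cube :: "complex \<Rightarrow> complex" where
  "sqrt_cube z = csqrt ((1 - 12 * z) ^ 3)"

lemma fps_deriv_of_square_eq_cube:
  fixes S P :: "'a :: idom fps"
  assumes "S ^ 2 = P ^ 3" and "P \<noteq> 0"
  shows "2 * P * fps_deriv S = 3 * fps_deriv P * S"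
proof -
  have "fps_deriv (S ^ 2) = fps_deriv (P ^ 3)"
    using assms(1) by simp
  then have deriv: "2 * S * fps_deriv S = 3 * P ^ 2 * fps_deriv P"
    by (simp add: fps_deriv_power' algebra_simps)
  have "P ^ 2 * (2 * P * fps_deriv S) = S * (2 * S * fps_deriv S)"
    using assms(1) by (simp add: power2_eq_square power3_eq_cube algebra_simps)
  also have "\<dots> = P ^ 2 * (3 * fps_deriv P * S)"
    using deriv by (simp add: algebra_simps)
  finally show ?thesis
    using assms(2) by simp
qed

lemma fps_ode_from_relation:
  fixes A S :: "'a :: {idom, ring_char_0} fps"
  assumes rel: "A * (2 * (1 + 4 * fps_X) ^ 2) = 1 + 36 * fps_X + S"
    and ode: "2 * (1 - 12 * fps_X) * fps_deriv S = - 36 * S"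
  shows "2 * (1 - 12 * fps_X) * (1 + 4 * fps_X) * fps_deriv A + (52 - 48 * fps_X) * A = 54"
proof -
  let ?Q = "1 + 4 * fps_X :: 'a fps"
  have "fps_deriv (A * (2 * ?Q ^ 2)) = fps_deriv (1 + 36 * fps_X + S)"
    using rel by simp
  then have deriv: "2 * ?Q ^ 2 * fps_deriv A + 16 * ?Q * A = 36 + fps_deriv S"
    by (simp add: fps_deriv_power' algebra_simps)
  have "2 * ?Q * (2 * (1 - 12 * fps_X) * ?Q * fps_deriv A + (52 - 48 * fps_X) * A)
      = 2 * (1 - 12 * fps_X) * (2 * ?Q ^ 2 * fps_deriv A + 16 * ?Q * A) + 36 * (A * (2 * ?Q ^ 2))"
    by (simp add: power2_eq_square algebra_simps)
  also have "\<dots> = 2 * ?Q * 54"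
    unfolding deriv rel using ode by (simp add: algebra_simps)
  finally show ?thesis
  proof (rule mult_left_cancel[THEN iffD1, rotated])
    have "(2 * ?Q) $ 0 \<noteq> 0"
      by simp
    then show "2 * ?Q \<noteq> 0"
      by auto
  qed
qed

lemma fps_ode_coeff_recurrence:
  fixes A :: "'a :: {idom, ring_char_0} fps"
  assumes "2 * (1 - 12 * fps_X) * (1 + 4 * fps_X) * fps_deriv A + (52 - 48 * fps_X) * A = 54"
  shows "of_nat (k + 2) * A $ (k + 2)
    = (8 * of_nat (k + 2) - 34) * A $ (k + 1) + 24 * (2 * of_nat (k + 2) - 3) * A $ k"
proof -
  have "2 * fps_deriv A + 52 * A
      = 54 + fps_X * (16 * fps_deriv A + 48 * A + fps_X * (96 * fps_deriv A))"
    using assms by (simp add: algebra_simps)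
  then have "(2 * fps_deriv A + 52 * A) $ Suc k
      = (54 + fps_X * (16 * fps_deriv A + 48 * A + fps_X * (96 * fps_deriv A))) $ Suc k"
    by (rule arg_cong)
  then have "2 * (of_nat k + 2) * A $ (k + 2) + 52 * A $ (k + 1)
      = 16 * (of_nat k + 1) * A $ (k + 1) + 48 * A $ k + 96 * of_nat k * A $ k"
    by (cases k) (simp_all add: fps_numeral_fps_const, simp_all add: algebra_simps)
  then have "2 * (of_nat (k + 2) * A $ (k + 2))
      = 2 * ((8 * of_nat (k + 2) - 34) * A $ (k + 1) + 24 * (2 * of_nat (k + 2) - 3) * A $ k)"
    by (simp add: algebra_simps)
  then show ?thesis
    by (metis mult_left_cancel zero_neq_numeral)
qed

lemma sqrt_cube_has_fps_expansion: "sqrt_cube has_fps_expansion fps_expansion sqrt_cube 0"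
  unfolding sqrt_cube_def
  by (intro analytic_at_imp_has_fps_expansion_0 analytic_intros)
     (auto simp: complex_nonpos_Reals_iff)

lemma fps_sqrt_cube_squared: "fps_expansion sqrt_cube 0 ^ 2 = (1 - 12 * fps_X) ^ 3"
proof (rule fps_expansion_unique_complex)
  show "(\<lambda>z. sqrt_cube z ^ 2) has_fps_expansion fps_expansion sqrt_cube 0 ^ 2"
    by (intro has_fps_expansion_power sqrt_cube_has_fps_expansion)
  have "(\<lambda>z. (1 - 12 * z) ^ 3) has_fps_expansion (1 - 12 * fps_X :: complex fps) ^ 3"
    by (intro has_fps_expansion_power has_fps_expansion_diff has_fps_expansion_1
        has_fps_expansion_mult has_fps_expansion_numeral has_fps_expansion_fps_X)
  then show "(\<lambda>z. sqrt_cube z ^ 2) has_fps_expansion (1 - 12 * fps_X) ^ 3"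
    by (simp add: sqrt_cube_def)
qed

lemma fps_sqrt_cube_ode:
  "2 * (1 - 12 * fps_X) * fps_deriv (fps_expansion sqrt_cube 0) = - 36 * fps_expansion sqrt_cube 0"
proof -
  have "(1 - 12 * fps_X :: complex fps) $ 0 \<noteq> 0"
    by simp
  then have "2 * (1 - 12 * fps_X) * fps_deriv (fps_expansion sqrt_cube 0)
      = 3 * fps_deriv (1 - 12 * fps_X) * fps_expansion sqrt_cube 0"
    by (intro fps_deriv_of_square_eq_cube fps_sqrt_cube_squared) auto
  then show ?thesis
    by simp
qed

lemma genf_eq_sqrt_cube: "genf = (\<lambda>z. (1 + 36 * z + sqrt_cube z) * inverse (2 * (1 + 4 * z) ^ 2))"
  unfolding genf_def sqrt_cube_def divide_inverse ..

lemma fps_genf_times_denominator: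
  "fps_expansion genf 0 * (2 * (1 + 4 * fps_X) ^ 2) = 1 + 36 * fps_X + fps_expansion sqrt_cube 0"
proof -
  let ?D = "2 * (1 + 4 * fps_X) ^ 2 :: complex fps"
  have "genf has_fps_expansion (1 + 36 * fps_X + fps_expansion sqrt_cube 0) * inverse ?D"
    unfolding genf_eq_sqrt_cube
    by (intro has_fps_expansion_mult has_fps_expansion_add has_fps_expansion_inverse
        has_fps_expansion_power sqrt_cube_has_fps_expansion has_fps_expansion_numeral
        has_fps_expansion_1 has_fps_expansion_fps_X) simp_all
  then have "fps_expansion genf 0 = (1 + 36 * fps_X + fps_expansion sqrt_cube 0) * inverse ?D"
    by (rule fps_expansion_eqI)
  moreover have "inverse ?D * ?D = 1"
    by (rule inverse_mult_eq_1) simp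
  ultimately show ?thesis
    by (simp only: mult.assoc mult_1_right)
qed

lemma a_eq_fps_nth: "a n = fps_expansion genf 0 $ n"
  by (simp add: a_def fps_expansion_def)

theorem mainTheorem7:
  fixes n :: nat
  assumes "n \<ge> 2"
  shows "of_nat n * a n = (8 * of_nat n - 34) * a (n - 1) + 24 * (2 * of_nat n - 3) * a (n - 2)"
proof -
  obtain k where n: "n = k + 2"
    using le_Suc_ex[OF assms] by (auto simp: add.commute)
  have "2 * (1 - 12 * fps_X) * (1 + 4 * fps_X) * fps_deriv (fps_expansion genf 0)
      + (52 - 48 * fps_X) * fps_expansion genf 0 = 54"
    by (rule fps_ode_from_relation[OF fps_genf_times_denominator fps_sqrt_cube_ode])
  from fps_ode_coeff_recurrence[OF this, of k] show ?thesis
    by (simp add: n a_eq_fps_nth)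
qed

end
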